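(* Suppose $(\mathcal A,s,D,\{v_i\})$ satisfies condition (1) of $c$-efficiency and each $v_i$ is subadditive over independent items. For a bidder $i$ and a constant $l_i\ge0$, let $L_i(t_i)=\{j:V_i(t_{ij})<l_i\}$ and $\hat\mu_i^{(s)}(t_i,S)=\mu_i^{(s)}(t_i,S\cap L_i(t_i))$. Then $\hat\mu_i^{(s)}(\cdot,\cdot)$ is monotone, subadditive, has no externalities, and is $l_i$-Lipschitz.
   Context: Types $t_i=(t_{ij})_j$, $t_{ij}\sim D_{ij}$ independent. For a function $g(t_i,S)$: no externalities = $g(t_i,S)=g(t_i',S)$ whenever $t_{ij}=t'_{ij}$ for all $j\in S$; monotone = $g(t_i,U)\le g(t_i,V)$ for $U\subseteq V$; subadditive = $g(t_i,U\cup V)\le g(t_i,U)+g(t_i,V)$. $v_i$ subadditive over independent items means $v_i$ has these three properties. $V_i(t_{ij})=v_i(t_i,\{j\})$. $g$ is $\ell$-Lipschitz if for all $t,t'$ and $X,Y\subseteq[m]$, $|g(t,X)-g(t',Y)|\le\ell(|X\triangle Y|+|\{j\in X\cap Y:t_j\ne t'_j\}|)$. Simultaneous auction $\mathcal A$: $m$ parallel single-item auctions on bids $b_i\in(\mathbb R_{\ge0}\cup\{\perp\})^m$, per-item allocation $X_i^{(j)}(b^{(j)})\subseteq\{j\}$ and payment $p_i^{(j)}(b^{(j)})$; $X_i(b)=\bigcup_jX_i^{(j)}$. $s$ is a strategy profile. $\mu_i^{(s)}(t_i,S)=\sup_{q_i\in(\mathbb R_{\ge0}\cup\{\perp\})^m}\mathbb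 E_{t_{-i}\sim D_{-i},b_{-i}\sim s_{-i}(t_{-i})}\big[v_i(t_i,X_i(q_i,b_{-i})\cap S)-\sum_{j\in S}p_i^{(j)}(q_i^{(j)},b_{-i}^{(j)})\big]$. Condition (1): per-item payments are nonnegative and bidding $\perp$ on an item incurs no payment for it. *)

theory Defs
  imports "HOL-Probability.Probability"
begin

(* Bidders are 0..<n, items are 0..<m.
   A type of bidder k is a function t :: nat => 'ty (item j |-> t j = t_kj).
   A bid vector of one bidder is nat => real option (None = bottom).
   A bid profile is nat => nat => real option (bidder => item => bid).
   Per-item auction of item j: alloc j k c says bidder k wins item j given the
   bids c :: nat => real option on item j of all bidders; pay j k c is the
   payment of bidder k in the auction of item j. *)

definition valid_bids :: "(nat \<Rightarrow> real option) set" where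
  "valid_bids = {q. \<forall>j y. q j = Some y \<longrightarrow> 0 \<le> y}"

definition item_bids :: "(nat \<Rightarrow> nat \<Rightarrow> real option) \<Rightarrow> nat \<Rightarrow> (nat \<Rightarrow> real option)" where
  "item_bids b j = (\<lambda>k. b k j)"

definition won :: "(nat \<Rightarrow> nat \<Rightarrow> (nat \<Rightarrow> real option) \<Rightarrow> bool) \<Rightarrow> nat \<Rightarrow> nat
    \<Rightarrow> (nat \<Rightarrow> nat \<Rightarrow> real option) \<Rightarrow> nat set" where
  "won alloc m i b = {j \<in> {..<m}. alloc j i (item_bids b j)}"

(* distribution of b_{-i}: t_{-i} ~ D_{-i} (independent t_kj ~ D k j), b_k ~ s k (t_k);
   bidders outside {..<n}-{i} bid bottom everywhere *)
definition others_bids :: "nat \<Rightarrow> nat \<Rightarrow> nat \<Rightarrow> (nat \<Rightarrow> nat \<Rightarrow> 'ty pmf)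
    \<Rightarrow> (nat \<Rightarrow> (nat \<Rightarrow> 'ty) \<Rightarrow> (nat \<Rightarrow> real option) pmf) \<Rightarrow> (nat \<Rightarrow> nat \<Rightarrow> real option) pmf" where
  "others_bids n m i D s =
     bind_pmf (Pi_pmf ({..<n} - {i}) undefined (\<lambda>k. Pi_pmf {..<m} undefined (\<lambda>j. D k j)))
       (\<lambda>T. Pi_pmf ({..<n} - {i}) (\<lambda>_. None) (\<lambda>k. s k (T k)))"

definition mu :: "nat \<Rightarrow> nat \<Rightarrow> (nat \<Rightarrow> nat \<Rightarrow> 'ty pmf)
    \<Rightarrow> (nat \<Rightarrow> (nat \<Rightarrow> 'ty) \<Rightarrow> (nat \<Rightarrow> real option) pmf)
    \<Rightarrow> (nat \<Rightarrow> (nat \<Rightarrow> 'ty) \<Rightarrow> nat set \<Rightarrow> real)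
    \<Rightarrow> (nat \<Rightarrow> nat \<Rightarrow> (nat \<Rightarrow> real option) \<Rightarrow> bool)
    \<Rightarrow> (nat \<Rightarrow> nat \<Rightarrow> (nat \<Rightarrow> real option) \<Rightarrow> real)
    \<Rightarrow> nat \<Rightarrow> (nat \<Rightarrow> 'ty) \<Rightarrow> nat set \<Rightarrow> real" where
  "mu n m D s v alloc pay i t S =
     (SUP q \<in> valid_bids. measure_pmf.expectation (others_bids n m i D s)
        (\<lambda>B. v i t (won alloc m i (B(i := q)) \<inter> S)
             - (\<Sum>j\<in>S. pay j i (item_bids (B(i := q)) j))))"

(* L_i(t_i) = {j : V_i(t_ij) < l_i}, with V_i(t_ij) = v_i(t_i,{j}) *)
definition low_items :: "nat \<Rightarrow> (nat \<Rightarrow> (nat \<Rightarrow> 'ty) \<Rightarrow> nat set \<Rightarrow> real) \<Rightarrow> real \<Rightarrow> nat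
    \<Rightarrow> (nat \<Rightarrow> 'ty) \<Rightarrow> nat set" where
  "low_items m v l i t = {j \<in> {..<m}. v i t {j} < l}"

definition mu_hat :: "nat \<Rightarrow> nat \<Rightarrow> (nat \<Rightarrow> nat \<Rightarrow> 'ty pmf)
    \<Rightarrow> (nat \<Rightarrow> (nat \<Rightarrow> 'ty) \<Rightarrow> (nat \<Rightarrow> real option) pmf)
    \<Rightarrow> (nat \<Rightarrow> (nat \<Rightarrow> 'ty) \<Rightarrow> nat set \<Rightarrow> real)
    \<Rightarrow> (nat \<Rightarrow> nat \<Rightarrow> (nat \<Rightarrow> real option) \<Rightarrow> bool)
    \<Rightarrow> (nat \<Rightarrow> nat \<Rightarrow> (nat \<Rightarrow> real option) \<Rightarrow> real)
    \<Rightarrow> real \<Rightarrow> nat \<Rightarrow> (nat \<Rightarrow> 'ty) \<Rightarrow> nat set \<Rightarrow> real" where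
  "mu_hat n m D s v alloc pay l i t S = mu n m D s v alloc pay i t (S \<inter> low_items m v l i t)"

definition no_externalities :: "nat \<Rightarrow> ((nat \<Rightarrow> 'ty) \<Rightarrow> nat set \<Rightarrow> real) \<Rightarrow> bool" where
  "no_externalities m g \<longleftrightarrow> (\<forall>t t' S. S \<subseteq> {..<m} \<longrightarrow> (\<forall>j\<in>S. t j = t' j) \<longrightarrow> g t S = g t' S)"

definition monotone_val :: "nat \<Rightarrow> ((nat \<Rightarrow> 'ty) \<Rightarrow> nat set \<Rightarrow> real) \<Rightarrow> bool" where
  "monotone_val m g \<longleftrightarrow> (\<forall>t U V. U \<subseteq> V \<longrightarrow> V \<subseteq> {..<m} \<longrightarrow> g t U \<le> g t V)"

definition subadditive_val :: "nat \<Rightarrow> ((nat \<Rightarrow> 'ty) \<Rightarrow> nat set \<Rightarrow> real) \<Rightarrow> bool" where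
  "subadditive_val m g \<longleftrightarrow> (\<forall>t U V. U \<subseteq> {..<m} \<longrightarrow> V \<subseteq> {..<m} \<longrightarrow> g t (U \<union> V) \<le> g t U + g t V)"

definition lipschitz_val :: "nat \<Rightarrow> real \<Rightarrow> ((nat \<Rightarrow> 'ty) \<Rightarrow> nat set \<Rightarrow> real) \<Rightarrow> bool" where
  "lipschitz_val m l g \<longleftrightarrow> (\<forall>t t' X Y. X \<subseteq> {..<m} \<longrightarrow> Y \<subseteq> {..<m} \<longrightarrow>
      \<bar>g t X - g t' Y\<bar> \<le> l * real (card ((X - Y) \<union> (Y - X)) + card {j \<in> X \<inter> Y. t j \<noteq> t' j}))"

end

theory Submission
  imports Defs
begin

text \<open>The key facts about \<open>\<mu>\<close> are obtained by bid surgery: restricting a deviation \<open>q\<close> to the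
items of \<open>U\<close> (bidding \<open>\<bottom>\<close> elsewhere) does not change what is won on \<open>U\<close> and costs nothing
outside \<open>U\<close>, which gives monotonicity; a single \<open>q\<close> split between \<open>U\<close> and \<open>V - U\<close>
gives subadditivity. Removing the items of \<open>L\<^sub>i(t\<^sub>i)\<close> on which two types disagree then costs at
most \<open>l\<^sub>i\<close> per item, since \<open>\<mu>\<close> is bounded by the subadditive valuation and each remaining item
is worth less than \<open>l\<^sub>i\<close>; the other changes are absorbed by monotonicity, giving the Lipschitz
bound.\<close>

lemma valuation_nonneg:
  assumes "monotone_val m g" "subadditive_val m g" "A \<subseteq> {..<m}"
  shows "0 \<le> g t A"
proof -
  have "g t ({} \<union> {}) \<le> g t {} + g t {}"
    using assms(2) unfolding subadditive_val_def by blast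
  moreover have "g t {} \<le> g t A"
    using assms(1,3) unfolding monotone_val_def by blast
  ultimately show ?thesis by simp
qed

lemma subadditive_val_le_sum_singletons:
  assumes "subadditive_val m g" "finite W" "W \<noteq> {}" "W \<subseteq> {..<m}"
  shows "g t W \<le> (\<Sum>j\<in>W. g t {j})"
  using assms(2-4)
proof (induction W rule: finite_ne_induct)
  case (insert x F)
  have "g t ({x} \<union> F) \<le> g t {x} + g t F"
    by (rule assms(1)[unfolded subadditive_val_def, rule_format]) (use insert.prems in auto)
  also have "g t F \<le> (\<Sum>j\<in>F. g t {j})"
    using insert.IH insert.prems by simp
  also have "g t {x} + (\<Sum>j\<in>F. g t {j}) = (\<Sum>j\<in>insert x F. g t {j})"
    using insert.hyps by simp
  finally show ?case
    by simp
qed simp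

subsection \<open>Restricting to a locally determined set of items\<close>

lemma monotone_val_restrict:
  assumes "monotone_val m g"
  shows "monotone_val m (\<lambda>t S. g t (S \<inter> L t))"
  unfolding monotone_val_def
proof (intro allI impI)
  fix t and U V :: "nat set"
  assume "U \<subseteq> V" "V \<subseteq> {..<m}"
  then show "g t (U \<inter> L t) \<le> g t (V \<inter> L t)"
    by (intro assms[unfolded monotone_val_def, rule_format]) auto
qed

lemma subadditive_val_restrict:
  assumes "subadditive_val m g"
  shows "subadditive_val m (\<lambda>t S. g t (S \<inter> L t))"
  unfolding subadditive_val_def
proof (intro allI impI)
  fix t and U V :: "nat set"
  assume "U \<subseteq> {..<m}" "V \<subseteq> {..<m}"
  have "(U \<union> V) \<inter> L t = U \<inter> L t \<union> V \<inter> L t"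
    by blast
  then show "g t ((U \<union> V) \<inter> L t) \<le> g t (U \<inter> L t) + g t (V \<inter> L t)"
    using \<open>U \<subseteq> {..<m}\<close> \<open>V \<subseteq> {..<m}\<close>
    by (simp only:) (rule assms[unfolded subadditive_val_def, rule_format]; blast)
qed

definition locally_determined :: "nat \<Rightarrow> ((nat \<Rightarrow> 'ty) \<Rightarrow> nat set) \<Rightarrow> bool" where
  "locally_determined m L \<longleftrightarrow>
     (\<forall>t t' S. S \<subseteq> {..<m} \<longrightarrow> (\<forall>j\<in>S. t j = t' j) \<longrightarrow> S \<inter> L t = S \<inter> L t')"

lemma locally_determined_low_items:
  fixes v :: "nat \<Rightarrow> (nat \<Rightarrow> 'ty) \<Rightarrow> nat set \<Rightarrow> real"
  assumes "no_externalities m (v i)"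
  shows "locally_determined m (low_items m v l i)"
  unfolding locally_determined_def
proof (intro allI impI)
  fix t t' :: "nat \<Rightarrow> 'ty" and S
  assume S: "S \<subseteq> {..<m}" and agree: "\<forall>j\<in>S. t j = t' j"
  have "v i t {j} = v i t' {j}" if "j \<in> S" for j
    by (rule assms[unfolded no_externalities_def, rule_format]) (use that S agree in auto)
  then show "S \<inter> low_items m v l i t = S \<inter> low_items m v l i t'"
    by (auto simp: low_items_def)
qed

lemma no_externalities_restrict:
  fixes g :: "(nat \<Rightarrow> 'ty) \<Rightarrow> nat set \<Rightarrow> real"
  assumes "no_externalities m g" "locally_determined m L"
  shows "no_externalities m (\<lambda>t S. g t (S \<inter> L t))"
  unfolding no_externalities_def
proof (intro allI impI)
  fix t t' :: "nat \<Rightarrow> 'ty" and S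
  assume S: "S \<subseteq> {..<m}" and agree: "\<forall>j\<in>S. t j = t' j"
  have local: "S \<inter> L t = S \<inter> L t'"
    using assms(2) S agree unfolding locally_determined_def by blast
  have "g t (S \<inter> L t') = g t' (S \<inter> L t')"
    by (rule assms(1)[unfolded no_externalities_def, rule_format]) (use S agree in auto)
  then show "g t (S \<inter> L t) = g t' (S \<inter> L t')"
    unfolding local .
qed

lemma card_diff_agreement_le:
  assumes "finite X" "finite Y"
  shows "card (X - {j \<in> X \<inter> Y. t j = t' j})
           \<le> card ((X - Y) \<union> (Y - X)) + card {j \<in> X \<inter> Y. t j \<noteq> t' j}"
proof -
  have "card (X - {j \<in> X \<inter> Y. t j = t' j}) \<le> card ((X - Y) \<union> {j \<in> X \<inter> Y. t j \<noteq> t' j})"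
    using assms by (intro card_mono) auto
  also have "\<dots> \<le> card (X - Y) + card {j \<in> X \<inter> Y. t j \<noteq> t' j}"
    by (rule card_Un_le)
  also have "\<dots> \<le> card ((X - Y) \<union> (Y - X)) + card {j \<in> X \<inter> Y. t j \<noteq> t' j}"
    using assms by (intro add_right_mono card_mono) auto
  finally show ?thesis .
qed

context
  fixes m :: nat and l :: real and g :: "(nat \<Rightarrow> 'ty) \<Rightarrow> nat set \<Rightarrow> real" and L
  assumes l: "0 \<le> l"
    and mono: "monotone_val m g" and subadd: "subadditive_val m g"
    and no_ext: "no_externalities m g" and local: "locally_determined m L"
    and low: "\<And>t W. W \<subseteq> L t \<Longrightarrow> W \<noteq> {} \<Longrightarrow> g t W \<le> l * card W"
      \<comment> \<open>\<open>W \<noteq> {}\<close>: for \<open>g = \<mu>\<close>, \<open>\<mu> t {} = v\<^sub>i t {}\<close> need not vanish\<close>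
begin

lemma restrict_diff_le:
  assumes X: "X \<subseteq> {..<m}" and Y: "Y \<subseteq> {..<m}"
  shows "g t (X \<inter> L t) - g t' (Y \<inter> L t')
           \<le> l * real (card ((X - Y) \<union> (Y - X)) + card {j \<in> X \<inter> Y. t j \<noteq> t' j})"
proof -
  define Z where "Z = {j \<in> X \<inter> Y. t j = t' j}"
  define W where "W = X \<inter> L t - Z"
  have Z: "Z \<subseteq> {..<m}" "\<forall>j\<in>Z. t j = t' j"
    using X by (auto simp: Z_def)
  have fin: "finite X" "finite Y"
    using X Y finite_subset by blast+
  have "card W \<le> card (X - Z)"
    using fin by (intro card_mono) (auto simp: W_def)
  also have "\<dots> \<le> card ((X - Y) \<union> (Y - X)) + card {j \<in> X \<inter> Y. t j \<noteq> t' j}"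
    unfolding Z_def using fin by (rule card_diff_agreement_le)
  finally have card_W: "real (card W) \<le> card ((X - Y) \<union> (Y - X)) + card {j \<in> X \<inter> Y. t j \<noteq> t' j}"
    by linarith
  have split: "X \<inter> L t = Z \<inter> L t \<union> W"
    by (auto simp: W_def Z_def)
  have "g t (X \<inter> L t) \<le> g t (Z \<inter> L t) + l * card W"
  proof (cases "W = {}")
    case False
    have "g t (X \<inter> L t) \<le> g t (Z \<inter> L t) + g t W"
      unfolding split
      by (rule subadd[unfolded subadditive_val_def, rule_format]) (use X Z(1) in \<open>auto simp: W_def\<close>)
    also have "g t W \<le> l * card W"
      using False by (intro low) (auto simp: W_def)
    finally show ?thesis by simp
  qed (use split in simp)
  also have "g t (Z \<inter> L t) = g t' (Z \<inter> L t')"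
    by (rule no_externalities_restrict[OF no_ext local, unfolded no_externalities_def, rule_format])
      (use Z in auto)
  also have "g t' (Z \<inter> L t') \<le> g t' (Y \<inter> L t')"
  proof -
    have "Z \<inter> L t' \<subseteq> Y \<inter> L t'" "Y \<inter> L t' \<subseteq> {..<m}"
      using Y by (auto simp: Z_def)
    then show ?thesis
      using mono unfolding monotone_val_def by blast
  qed
  finally have "g t (X \<inter> L t) - g t' (Y \<inter> L t') \<le> l * card W"
    by linarith
  also have "\<dots> \<le> l * real (card ((X - Y) \<union> (Y - X)) + card {j \<in> X \<inter> Y. t j \<noteq> t' j})"
    by (rule mult_left_mono[OF card_W l])
  finally show ?thesis .
qed

lemma lipschitz_val_restrict: "lipschitz_val m l (\<lambda>t S. g t (S \<inter> L t))"
  unfolding lipschitz_val_def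
proof (intro allI impI)
  fix t t' :: "nat \<Rightarrow> 'ty" and X Y
  assume X: "X \<subseteq> {..<m}" and Y: "Y \<subseteq> {..<m}"
  have "(Y - X) \<union> (X - Y) = (X - Y) \<union> (Y - X)" "{j \<in> Y \<inter> X. t' j \<noteq> t j} = {j \<in> X \<inter> Y. t j \<noteq> t' j}"
    by auto
  then have "- (g t (X \<inter> L t) - g t' (Y \<inter> L t'))
      \<le> l * real (card ((X - Y) \<union> (Y - X)) + card {j \<in> X \<inter> Y. t j \<noteq> t' j})"
    using restrict_diff_le[OF Y X, of t' t] by simp
  with restrict_diff_le[OF X Y, of t t'] show "\<bar>g t (X \<inter> L t) - g t' (Y \<inter> L t')\<bar>
      \<le> l * real (card ((X - Y) \<union> (Y - X)) + card {j \<in> X \<inter> Y. t j \<noteq> t' j})"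
    by (simp only: abs_le_iff)
qed

end

subsection \<open>The value of the best deviation\<close>

definition bid_utility :: "nat \<Rightarrow> (nat \<Rightarrow> (nat \<Rightarrow> 'ty) \<Rightarrow> nat set \<Rightarrow> real)
    \<Rightarrow> (nat \<Rightarrow> nat \<Rightarrow> (nat \<Rightarrow> real option) \<Rightarrow> bool)
    \<Rightarrow> (nat \<Rightarrow> nat \<Rightarrow> (nat \<Rightarrow> real option) \<Rightarrow> real)
    \<Rightarrow> nat \<Rightarrow> (nat \<Rightarrow> 'ty) \<Rightarrow> (nat \<Rightarrow> real option) \<Rightarrow> nat set
    \<Rightarrow> (nat \<Rightarrow> nat \<Rightarrow> real option) \<Rightarrow> real" where
  "bid_utility m v alloc pay i t q S B = v i t (won alloc m i (B(i := q)) \<inter> S)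
      - (\<Sum>j\<in>S. pay j i (item_bids (B(i := q)) j))"

definition bids_on :: "nat set \<Rightarrow> (nat \<Rightarrow> real option) \<Rightarrow> nat \<Rightarrow> real option" where
  "bids_on U q = (\<lambda>j. if j \<in> U then q j else None)"

lemma bids_on_valid: "q \<in> valid_bids \<Longrightarrow> bids_on U q \<in> valid_bids"
  by (simp add: valid_bids_def bids_on_def)

lemma item_bids_bids_on:
  "j \<in> U \<Longrightarrow> item_bids (B(i := bids_on U q)) j = item_bids (B(i := q)) j"
  by (auto simp: item_bids_def bids_on_def)

lemma won_bids_on_Int:
  "won alloc m i (B(i := bids_on U q)) \<inter> U = won alloc m i (B(i := q)) \<inter> U"
  by (auto simp: won_def item_bids_bids_on)

locale auction_bidder =
  fixes n m i :: nat and D :: "nat \<Rightarrow> nat \<Rightarrow> 'ty pmf"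
    and s :: "nat \<Rightarrow> (nat \<Rightarrow> 'ty) \<Rightarrow> (nat \<Rightarrow> real option) pmf"
    and v :: "nat \<Rightarrow> (nat \<Rightarrow> 'ty) \<Rightarrow> nat set \<Rightarrow> real"
    and alloc :: "nat \<Rightarrow> nat \<Rightarrow> (nat \<Rightarrow> real option) \<Rightarrow> bool"
    and pay :: "nat \<Rightarrow> nat \<Rightarrow> (nat \<Rightarrow> real option) \<Rightarrow> real"
  assumes pay_nonneg: "0 \<le> pay j k c"
    and pay_bot: "c k = None \<Longrightarrow> pay j k c = 0"
    and val_no_externalities: "no_externalities m (v i)"
    and val_monotone: "monotone_val m (v i)"
    and val_subadditive: "subadditive_val m (v i)"
    and integrable_pay: "q \<in> valid_bids \<Longrightarrow> j < m \<Longrightarrow>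
          integrable (measure_pmf (others_bids n m i D s)) (\<lambda>B. pay j i (item_bids (B(i := q)) j))"
begin

abbreviation M :: "(nat \<Rightarrow> nat \<Rightarrow> real option) measure" where
  "M \<equiv> measure_pmf (others_bids n m i D s)"

abbreviation expected_utility :: "(nat \<Rightarrow> 'ty) \<Rightarrow> (nat \<Rightarrow> real option) \<Rightarrow> nat set \<Rightarrow> real" where
  "expected_utility t q S \<equiv> integral\<^sup>L M (bid_utility m v alloc pay i t q S)"

abbreviation \<mu> :: "(nat \<Rightarrow> 'ty) \<Rightarrow> nat set \<Rightarrow> real" where
  "\<mu> \<equiv> mu n m D s v alloc pay i"

lemma mu_eq_SUP: "\<mu> t S = (SUP q\<in>valid_bids. expected_utility t q S)"
  by (simp add: mu_def bid_utility_def[abs_def])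

lemma val_mono: "U \<subseteq> V \<Longrightarrow> V \<subseteq> {..<m} \<Longrightarrow> v i t U \<le> v i t V"
  using val_monotone unfolding monotone_val_def by blast

lemma integrable_bid_utility:
  assumes q: "q \<in> valid_bids" and S: "S \<subseteq> {..<m}"
  shows "integrable M (bid_utility m v alloc pay i t q S)"
proof -
  have "integrable M (\<lambda>B. v i t (won alloc m i (B(i := q)) \<inter> S))"
  proof (rule measure_pmf.integrable_const_bound[where B = "v i t {..<m}"])
    show "AE B in M. norm (v i t (won alloc m i (B(i := q)) \<inter> S)) \<le> v i t {..<m}"
    proof (rule AE_I2)
      fix B
      have "won alloc m i (B(i := q)) \<inter> S \<subseteq> {..<m}"
        using S by auto
      then show "norm (v i t (won alloc m i (B(i := q)) \<inter> S)) \<le> v i t {..<m}"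
        using valuation_nonneg[OF val_monotone val_subadditive] val_mono by simp
    qed
  qed simp
  moreover have "integrable M (\<lambda>B. \<Sum>j\<in>S. pay j i (item_bids (B(i := q)) j))"
    using integrable_pay q S by (intro Bochner_Integration.integrable_sum) auto
  ultimately show ?thesis
    unfolding bid_utility_def[abs_def] by (rule Bochner_Integration.integrable_diff)
qed

lemma expected_utility_le_val:
  assumes q: "q \<in> valid_bids" and S: "S \<subseteq> {..<m}"
  shows "expected_utility t q S \<le> v i t S"
proof -
  have "expected_utility t q S \<le> integral\<^sup>L M (\<lambda>_. v i t S)"
  proof (rule integral_mono[OF integrable_bid_utility[OF q S]])
    fix B
    have "v i t (won alloc m i (B(i := q)) \<inter> S) \<le> v i t S"
      using S by (intro val_mono) auto
    moreover have "0 \<le> (\<Sum>j\<in>S. pay j i (item_bids (B(i := q)) j))"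
      by (intro sum_nonneg pay_nonneg)
    ultimately show "bid_utility m v alloc pay i t q S B \<le> v i t S"
      unfolding bid_utility_def by simp
  qed simp
  then show ?thesis by simp
qed

lemma expected_utility_le_mu:
  assumes "q \<in> valid_bids" "S \<subseteq> {..<m}"
  shows "expected_utility t q S \<le> \<mu> t S"
  unfolding mu_eq_SUP
  using assms expected_utility_le_val[OF _ assms(2)]
  by (intro cSUP_upper bdd_aboveI2) auto

lemma mu_le:
  assumes "\<And>q. q \<in> valid_bids \<Longrightarrow> expected_utility t q S \<le> c"
  shows "\<mu> t S \<le> c"
proof -
  have "(\<lambda>_. None) \<in> valid_bids"
    by (simp add: valid_bids_def)
  then show ?thesis
    unfolding mu_eq_SUP using assms by (intro cSUP_least) auto
qed

lemma mu_le_val: "S \<subseteq> {..<m} \<Longrightarrow> \<mu> t S \<le> v i t S"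
  by (rule mu_le) (rule expected_utility_le_val)

lemma payments_bids_on:
  assumes "U \<subseteq> V" "finite V"
  shows "(\<Sum>j\<in>V. pay j i (item_bids (B(i := bids_on U q)) j))
           = (\<Sum>j\<in>U. pay j i (item_bids (B(i := q)) j))"
proof -
  have "(\<Sum>j\<in>V - U. pay j i (item_bids (B(i := bids_on U q)) j)) = 0"
    by (intro sum.neutral ballI pay_bot) (simp add: item_bids_def bids_on_def)
  then have "(\<Sum>j\<in>V. pay j i (item_bids (B(i := bids_on U q)) j))
      = (\<Sum>j\<in>U. pay j i (item_bids (B(i := bids_on U q)) j))"
    using sum.subset_diff[OF assms, of "\<lambda>j. pay j i (item_bids (B(i := bids_on U q)) j)"] by simp
  also have "\<dots> = (\<Sum>j\<in>U. pay j i (item_bids (B(i := q)) j))"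
    by (intro sum.cong) (simp_all add: item_bids_bids_on)
  finally show ?thesis .
qed

lemma bid_utility_le_bids_on:
  assumes "U \<subseteq> V" "V \<subseteq> {..<m}"
  shows "bid_utility m v alloc pay i t q U B \<le> bid_utility m v alloc pay i t (bids_on U q) V B"
proof -
  have "v i t (won alloc m i (B(i := q)) \<inter> U) = v i t (won alloc m i (B(i := bids_on U q)) \<inter> U)"
    by (simp only: won_bids_on_Int)
  also have "\<dots> \<le> v i t (won alloc m i (B(i := bids_on U q)) \<inter> V)"
    using assms by (intro val_mono) auto
  finally have "v i t (won alloc m i (B(i := q)) \<inter> U) \<le> v i t (won alloc m i (B(i := bids_on U q)) \<inter> V)" .
  moreover have "finite V"
    using assms(2) finite_subset by blast
  ultimately show ?thesis
    unfolding bid_utility_def using payments_bids_on[OF assms(1)] by simp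
qed

lemma mu_mono:
  assumes UV: "U \<subseteq> V" and V: "V \<subseteq> {..<m}"
  shows "\<mu> t U \<le> \<mu> t V"
proof (rule mu_le)
  fix q assume q: "q \<in> valid_bids"
  have "expected_utility t q U \<le> expected_utility t (bids_on U q) V"
    using UV V q bids_on_valid bid_utility_le_bids_on
    by (intro integral_mono integrable_bid_utility) auto
  also have "\<dots> \<le> \<mu> t V"
    using q V by (intro expected_utility_le_mu bids_on_valid)
  finally show "expected_utility t q U \<le> \<mu> t V" .
qed

lemma bid_utility_Un_le:
  assumes "U \<subseteq> {..<m}" "V \<subseteq> {..<m}" "U \<inter> V = {}"
  shows "bid_utility m v alloc pay i t q (U \<union> V) B
           \<le> bid_utility m v alloc pay i t q U B + bid_utility m v alloc pay i t q V B"
proof -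
  let ?w = "won alloc m i (B(i := q))"
  have "v i t (?w \<inter> U \<union> ?w \<inter> V) \<le> v i t (?w \<inter> U) + v i t (?w \<inter> V)"
    by (rule val_subadditive[unfolded subadditive_val_def, rule_format]) (use assms in auto)
  moreover have "?w \<inter> (U \<union> V) = ?w \<inter> U \<union> ?w \<inter> V"
    by blast
  moreover have "finite U" "finite V"
    using assms(1,2) finite_subset by blast+
  ultimately show ?thesis
    unfolding bid_utility_def using assms(3) by (simp add: sum.union_disjoint)
qed

lemma mu_subadditive: "subadditive_val m \<mu>"
  unfolding subadditive_val_def
proof (intro allI impI)
  fix t and U V :: "nat set"
  assume U: "U \<subseteq> {..<m}" and V: "V \<subseteq> {..<m}"
  then have VU: "V - U \<subseteq> {..<m}"
    by blast
  have "\<mu> t (U \<union> (V - U)) \<le> \<mu> t U + \<mu> t (V - U)"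
  proof (rule mu_le)
    fix q assume q: "q \<in> valid_bids"
    have "expected_utility t q (U \<union> (V - U))
        \<le> integral\<^sup>L M (\<lambda>B. bid_utility m v alloc pay i t q U B + bid_utility m v alloc pay i t q (V - U) B)"
      using U V q bid_utility_Un_le[OF U VU]
      by (intro integral_mono Bochner_Integration.integrable_add integrable_bid_utility) auto
    also have "\<dots> = expected_utility t q U + expected_utility t q (V - U)"
      using U VU q by (intro Bochner_Integration.integral_add integrable_bid_utility)
    also have "\<dots> \<le> \<mu> t U + \<mu> t (V - U)"
      using U VU q by (intro add_mono expected_utility_le_mu)
    finally show "expected_utility t q (U \<union> (V - U)) \<le> \<mu> t U + \<mu> t (V - U)" .
  qed
  also have "\<mu> t (V - U) \<le> \<mu> t V"
    using V by (intro mu_mono) auto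
  finally show "\<mu> t (U \<union> V) \<le> \<mu> t U + \<mu> t V"
    by simp
qed

lemma mu_monotone: "monotone_val m \<mu>"
  unfolding monotone_val_def by (intro allI impI mu_mono)

lemma mu_no_externalities: "no_externalities m \<mu>"
  unfolding no_externalities_def
proof (intro allI impI)
  fix t t' :: "nat \<Rightarrow> 'ty" and S
  assume S: "S \<subseteq> {..<m}" and agree: "\<forall>j\<in>S. t j = t' j"
  have "bid_utility m v alloc pay i t q S = bid_utility m v alloc pay i t' q S" for q
  proof
    fix B
    have "v i t (won alloc m i (B(i := q)) \<inter> S) = v i t' (won alloc m i (B(i := q)) \<inter> S)"
      by (rule val_no_externalities[unfolded no_externalities_def, rule_format]) (use S agree in auto)
    then show "bid_utility m v alloc pay i t q S B = bid_utility m v alloc pay i t' q S B"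
      unfolding bid_utility_def by simp
  qed
  then show "\<mu> t S = \<mu> t' S"
    unfolding mu_eq_SUP by simp
qed

lemma mu_le_card_low_items:
  assumes W: "W \<subseteq> low_items m v l i t" "W \<noteq> {}"
  shows "\<mu> t W \<le> l * card W"
proof -
  have Wm: "W \<subseteq> {..<m}"
    using W by (auto simp: low_items_def)
  then have "finite W"
    using finite_subset by blast
  have "\<mu> t W \<le> v i t W"
    by (rule mu_le_val[OF Wm])
  also have "\<dots> \<le> (\<Sum>j\<in>W. v i t {j})"
    by (rule subadditive_val_le_sum_singletons[OF val_subadditive \<open>finite W\<close> W(2) Wm])
  also have "\<dots> \<le> (\<Sum>j\<in>W. l)"
    using W by (intro sum_mono) (auto simp: low_items_def)
  also have "\<dots> = l * card W"
    by (simp add: mult.commute)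
  finally show ?thesis .
qed

end

theorem lemma7:
  fixes n m i :: nat and l :: real
    and D :: "nat \<Rightarrow> nat \<Rightarrow> 'ty pmf"
    and s :: "nat \<Rightarrow> (nat \<Rightarrow> 'ty) \<Rightarrow> (nat \<Rightarrow> real option) pmf"
    and v :: "nat \<Rightarrow> (nat \<Rightarrow> 'ty) \<Rightarrow> nat set \<Rightarrow> real"
    and alloc :: "nat \<Rightarrow> nat \<Rightarrow> (nat \<Rightarrow> real option) \<Rightarrow> bool"
    and pay :: "nat \<Rightarrow> nat \<Rightarrow> (nat \<Rightarrow> real option) \<Rightarrow> real"
  assumes i: "i < n"
    and l: "0 \<le> l"
    and pay_nonneg: "\<forall>j k c. 0 \<le> pay j k c"
    and pay_bot: "\<forall>j k c. c k = None \<longrightarrow> pay j k c = 0"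
    and val: "\<forall>k<n. no_externalities m (v k) \<and> monotone_val m (v k) \<and> subadditive_val m (v k)"
    and integrable_pay: "\<forall>q\<in>valid_bids. \<forall>j<m.
          integrable (measure_pmf (others_bids n m i D s)) (\<lambda>B. pay j i (item_bids (B(i := q)) j))"
  shows "monotone_val m (mu_hat n m D s v alloc pay l i)
       \<and> subadditive_val m (mu_hat n m D s v alloc pay l i)
       \<and> no_externalities m (mu_hat n m D s v alloc pay l i)
       \<and> lipschitz_val m l (mu_hat n m D s v alloc pay l i)"
proof -
  interpret auction_bidder n m i D s v alloc pay
    using i pay_nonneg pay_bot val integrable_pay by unfold_locales auto
  have mu_hat: "mu_hat n m D s v alloc pay l i = (\<lambda>t S. \<mu> t (S \<inter> low_items m v l i t))"
    by (simp add: mu_hat_def[abs_def])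
  have local: "locally_determined m (low_items m v l i)"
    using val_no_externalities by (rule locally_determined_low_items)
  show ?thesis
    unfolding mu_hat
    using monotone_val_restrict[OF mu_monotone] subadditive_val_restrict[OF mu_subadditive]
      no_externalities_restrict[OF mu_no_externalities local]
      lipschitz_val_restrict[OF l mu_monotone mu_subadditive mu_no_externalities local
        mu_le_card_low_items]
    by blast
qed

end
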